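(* Let $D=(V,E;s,t)$, $N$ be as in the context and let $\widetilde\Gamma_D=(N,\tilde\gamma)$ be the auxiliary game. Then $\mathcal{C}(\widetilde\Gamma_D)$ is the convex hull of the incidence vectors (in $\mathbb{R}^N$) of the minimum $s$-$t$ cuts constrained to $N$.
   Context: $D=(V,E;s,t)$ is a directed network with unit arc capacities (parallel arcs allowed); $N\subseteq E$ is the set of private arcs (players), $M=E\setminus N$ public arcs; every $s$-$t$ path contains an arc of $N$ and every arc lies on some $s$-$t$ path. For $S\subseteq N$, $\gamma(S)$ is the maximum number of pairwise arc-disjoint $s$-$t$ paths in $D_S=(V,S\cup M;s,t)$. $\sigma_N$ is the maximum number of $s$-$t$ paths pairwise sharing no arc of $N$. An $s$-$t$ cut constrained to $N$ is a set of arcs contained in $N$ meeting every $s$-$t$ path; it is minimum if of minimum cardinality. The auxiliary game $\widetilde\Gamma_D=(N,\tilde\gamma)$ has $\tilde\gamma(N)=\sigma_N$ and $\tilde\gamma(S)=\gamma(S)$ for $S\subsetneq N$. $\mathcal{C}(\widetilde\Gamma_D)=\{x\in\mathbb{R}^N_{\ge0}:x(N)=\sigma_N,\ x(S)\ge\tilde\gamma(S)\ \forall S\subseteq N\}$, where $x(S)=\sum_{i\in S}x_i$. *)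

theory Defs
  imports "HOL-Analysis.Analysis"
begin

text \<open>A directed multigraph: arcs of type 'e, each arc a has tail src a and head trg a.
  Parallel arcs are distinct elements of 'e with the same endpoints.\<close>

definition path_vertices :: "('e \<Rightarrow> 'v) \<Rightarrow> ('e \<Rightarrow> 'v) \<Rightarrow> 'e list \<Rightarrow> 'v list" where
  "path_vertices src trg p = map src p @ [trg (last p)]"

definition is_st_path :: "('e \<Rightarrow> 'v) \<Rightarrow> ('e \<Rightarrow> 'v) \<Rightarrow> 'v \<Rightarrow> 'v \<Rightarrow> 'e set \<Rightarrow> 'e list \<Rightarrow> bool" where
  "is_st_path src trg s t F p \<longleftrightarrow>
     p \<noteq> [] \<and> set p \<subseteq> F \<and> src (hd p) = s \<and> trg (last p) = t \<and>
     (\<forall>i. Suc i < length p \<longrightarrow> trg (p ! i) = src (p ! Suc i)) \<and>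
     distinct (path_vertices src trg p)"

definition st_paths :: "('e \<Rightarrow> 'v) \<Rightarrow> ('e \<Rightarrow> 'v) \<Rightarrow> 'v \<Rightarrow> 'v \<Rightarrow> 'e set \<Rightarrow> 'e list set" where
  "st_paths src trg s t F = {p. is_st_path src trg s t F p}"

definition gamma :: "('e \<Rightarrow> 'v) \<Rightarrow> ('e \<Rightarrow> 'v) \<Rightarrow> 'v \<Rightarrow> 'v \<Rightarrow> 'e set \<Rightarrow> 'e set \<Rightarrow> 'e set \<Rightarrow> nat" where
  "gamma src trg s t E N S =
     Max {card P | P. P \<subseteq> st_paths src trg s t (S \<union> (E - N)) \<and>
                      pairwise (\<lambda>p q. set p \<inter> set q = {}) P}"

definition sigmaN :: "('e \<Rightarrow> 'v) \<Rightarrow> ('e \<Rightarrow> 'v) \<Rightarrow> 'v \<Rightarrow> 'v \<Rightarrow> 'e set \<Rightarrow> 'e set \<Rightarrow> nat" where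
  "sigmaN src trg s t E N =
     Max {card P | P. P \<subseteq> st_paths src trg s t E \<and>
                      pairwise (\<lambda>p q. set p \<inter> set q \<inter> N = {}) P}"

definition gamma_tilde :: "('e \<Rightarrow> 'v) \<Rightarrow> ('e \<Rightarrow> 'v) \<Rightarrow> 'v \<Rightarrow> 'v \<Rightarrow> 'e set \<Rightarrow> 'e set \<Rightarrow> 'e set \<Rightarrow> nat" where
  "gamma_tilde src trg s t E N S =
     (if S = N then sigmaN src trg s t E N else gamma src trg s t E N S)"

definition is_cut_N :: "('e \<Rightarrow> 'v) \<Rightarrow> ('e \<Rightarrow> 'v) \<Rightarrow> 'v \<Rightarrow> 'v \<Rightarrow> 'e set \<Rightarrow> 'e set \<Rightarrow> 'e set \<Rightarrow> bool" where
  "is_cut_N src trg s t E N C \<longleftrightarrow>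
     C \<subseteq> N \<and> (\<forall>p \<in> st_paths src trg s t E. set p \<inter> C \<noteq> {})"

definition is_min_cut_N :: "('e \<Rightarrow> 'v) \<Rightarrow> ('e \<Rightarrow> 'v) \<Rightarrow> 'v \<Rightarrow> 'v \<Rightarrow> 'e set \<Rightarrow> 'e set \<Rightarrow> 'e set \<Rightarrow> bool" where
  "is_min_cut_N src trg s t E N C \<longleftrightarrow>
     is_cut_N src trg s t E N C \<and>
     (\<forall>C'. is_cut_N src trg s t E N C' \<longrightarrow> card C \<le> card C')"

text \<open>The core of the auxiliary game; vectors in R^N are vectors in real^'e (arc type finite) vanishing outside N.\<close>
definition core_tilde :: "('e::finite \<Rightarrow> 'v) \<Rightarrow> ('e \<Rightarrow> 'v) \<Rightarrow> 'v \<Rightarrow> 'v \<Rightarrow> 'e set \<Rightarrow> 'e set \<Rightarrow> (real ^ 'e) set" where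
  "core_tilde src trg s t E N =
     {x. (\<forall>i. i \<notin> N \<longrightarrow> x $ i = 0) \<and> (\<forall>i\<in>N. 0 \<le> x $ i) \<and>
         (\<Sum>i\<in>N. x $ i) = real (sigmaN src trg s t E N) \<and>
         (\<forall>S. S \<subseteq> N \<longrightarrow> (\<Sum>i\<in>S. x $ i) \<ge> real (gamma_tilde src trg s t E N S))}"

definition incidence_vec :: "'e::finite set \<Rightarrow> real ^ 'e" where
  "incidence_vec C = (\<chi> i. if i \<in> C then 1 else 0)"

end

theory Submission
  imports Defs
begin

text \<open>
  Incidence vectors of minimum cuts constrained to \<open>N\<close> lie in the core: by a Menger argument
  (augmenting paths in a network where every public arc is replaced by \<open>\<sigma>\<^sub>N + 1\<close> parallel
  copies) such a cut has exactly \<open>\<sigma>\<^sub>N\<close> arcs, and arc-disjoint paths in \<open>D\<^sub>S\<close> meet it in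
  distinct arcs of \<open>S\<close>. The core is convex, so it contains the convex hull.

  Conversely, a core vector \<open>x\<close> gives weight at least 1 to every s-t path and has total weight
  \<open>\<sigma>\<^sub>N\<close>. The arcs leaving the set of vertices reachable from \<open>s\<close> along arcs of weight 0 form a
  minimum cut \<open>C\<close>, and a path crossing \<open>C\<close> in \<open>k\<close> arcs weighs at least \<open>1 + (k - 1) \<theta>\<close> for
  \<open>\<theta> = min\<^sub>C x\<close>. Hence \<open>(x - \<theta> \<chi>\<^sub>C) / (1 - \<theta>)\<close> is again such a vector, with smaller
  support, and induction on the support writes \<open>x\<close> as a convex combination of the \<open>\<chi>\<^sub>C\<close>.
\<close>

section \<open>Walks and s-t paths\<close>

fun walk :: "('a \<Rightarrow> 'v) \<Rightarrow> ('a \<Rightarrow> 'v) \<Rightarrow> 'a set \<Rightarrow> 'v \<Rightarrow> 'v \<Rightarrow> 'a list \<Rightarrow> bool" where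
  "walk src trg F u v [] \<longleftrightarrow> u = v"
| "walk src trg F u v (a # p) \<longleftrightarrow> a \<in> F \<and> src a = u \<and> walk src trg F (trg a) v p"

lemma walk_set: "walk src trg F u v p \<Longrightarrow> set p \<subseteq> F"
  by (induction p arbitrary: u) auto

lemma walk_mono: "walk src trg F u v p \<Longrightarrow> set p \<subseteq> F' \<Longrightarrow> walk src trg F' u v p"
  by (induction p arbitrary: u) auto

lemma walk_append:
  "walk src trg F u v p \<Longrightarrow> walk src trg F v w q \<Longrightarrow> walk src trg F u w (p @ q)"
  by (induction p arbitrary: u) auto

lemma walk_snoc:
  "walk src trg F u v p \<Longrightarrow> a \<in> F \<Longrightarrow> src a = v \<Longrightarrow> walk src trg F u (trg a) (p @ [a])"
  by (induction p arbitrary: u) auto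

lemma walk_drop:
  "walk src trg F u v p \<Longrightarrow> k < length p \<Longrightarrow> walk src trg F (src (p ! k)) v (drop k p)"
proof (induction p arbitrary: u k)
  case (Cons a p)
  then show ?case by (cases k) auto
qed simp

lemma walk_map:
  "walk (src \<circ> f) (trg \<circ> f) F u v p \<Longrightarrow> walk src trg (f ` F) u v (map f p)"
  by (induction p arbitrary: u) auto

lemma walk_crosses:
  "walk src trg F u v p \<Longrightarrow> u \<in> A \<Longrightarrow> v \<notin> A \<Longrightarrow> \<exists>a\<in>set p. src a \<in> A \<and> trg a \<notin> A"
  by (induction p arbitrary: u) auto

lemma walk_telescope:
  "walk src trg F u v p \<Longrightarrow>
   (\<Sum>a\<leftarrow>p. of_bool (src a = w) - of_bool (trg a = w) :: int) = of_bool (u = w) - of_bool (v = w)"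
  by (induction p arbitrary: u) auto

lemma walk_shortcut:
  "walk src trg F u v p \<Longrightarrow> \<exists>q. walk src trg F u v q \<and> set q \<subseteq> set p \<and> distinct (u # map trg q)"
proof (induction p arbitrary: u)
  case Nil
  then show ?case by force
next
  case (Cons a p)
  then have "walk src trg F (trg a) v p" by simp
  then obtain q where q: "walk src trg F (trg a) v q" "set q \<subseteq> set p" "distinct (trg a # map trg q)"
    using Cons.IH by blast
  show ?case
  proof (cases "u \<in> set (trg a # map trg q)")
    case False
    then show ?thesis using q Cons.prems by (intro exI[of _ "a # q"]) auto
  next
    case True
    then have "u \<in> set (map trg (a # q))" by simp
    then obtain k where k: "k < length (a # q)" "trg ((a # q) ! k) = u"
      by (metis in_set_conv_nth length_map nth_map)
    have "walk src trg F (src a) v (a # q)" using q(1) Cons.prems by simp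
    from walk_drop[OF this k(1)]
    have "walk src trg F (src ((a # q) ! k)) v (drop k (a # q))" .
    then have "walk src trg F u v (drop (Suc k) (a # q))"
      using k by (simp add: Cons_nth_drop_Suc[symmetric])
    moreover have "distinct (u # map trg (drop (Suc k) (a # q)))"
    proof -
      have "drop k (map trg (a # q)) = map trg ((a # q) ! k # drop (Suc k) (a # q))"
        using k(1) by (simp only: drop_map Cons_nth_drop_Suc)
      then have "drop k (map trg (a # q)) = u # map trg (drop (Suc k) (a # q))"
        using k(2) by simp
      then show ?thesis using distinct_drop[of "map trg (a # q)" k] q(3) by simp
    qed
    moreover have "set (drop (Suc k) (a # q)) \<subseteq> set (a # p)"
      using q(2) set_drop_subset by fastforce
    ultimately show ?thesis by blast
  qed
qed

lemma walk_iff_chain: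
  "p \<noteq> [] \<Longrightarrow> walk src trg F u v p \<longleftrightarrow>
     set p \<subseteq> F \<and> src (hd p) = u \<and> trg (last p) = v \<and>
     (\<forall>i. Suc i < length p \<longrightarrow> trg (p ! i) = src (p ! Suc i))"
proof (induction p arbitrary: u)
  case (Cons a p)
  show ?case
  proof (cases p)
    case (Cons b p')
    have "(\<forall>i. Suc i < length (a # p) \<longrightarrow> trg ((a # p) ! i) = src ((a # p) ! Suc i)) \<longleftrightarrow>
          trg a = src b \<and> (\<forall>i. Suc i < length p \<longrightarrow> trg (p ! i) = src (p ! Suc i))"
      using Cons by (auto simp: nth_Cons split: nat.split)
    then show ?thesis using Cons.IH Cons by auto
  qed simp
qed simp

lemma path_vertices_walk:
  "walk src trg F u v p \<Longrightarrow> p \<noteq> [] \<Longrightarrow> path_vertices src trg p = u # map trg p"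
  by (induction p arbitrary: u) (auto simp: path_vertices_def neq_Nil_conv)

lemma is_st_path_iff_walk:
  "is_st_path src trg s t F p \<longleftrightarrow> p \<noteq> [] \<and> walk src trg F s t p \<and> distinct (s # map trg p)"
  using walk_iff_chain[of p src trg F s t] path_vertices_walk[of src trg F s t p]
  by (auto simp: is_st_path_def)

lemma st_path_set: "p \<in> st_paths src trg s t F \<Longrightarrow> set p \<subseteq> F"
  by (simp add: st_paths_def is_st_path_def)

lemma st_path_distinct: "p \<in> st_paths src trg s t F \<Longrightarrow> distinct p"
  by (auto simp: st_paths_def is_st_path_def path_vertices_def distinct_map)

lemma finite_st_paths: "finite F \<Longrightarrow> finite (st_paths src trg s t F)"
  by (rule finite_subset[OF _ finite_subset_distinct[of F]]) (auto dest: st_path_distinct st_path_set)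

lemma st_paths_mono: "F \<subseteq> F' \<Longrightarrow> st_paths src trg s t F \<subseteq> st_paths src trg s t F'"
  by (auto simp: st_paths_def is_st_path_def)

section \<open>Unit flows and Menger's theorem\<close>

definition reachable :: "('a \<Rightarrow> 'v) \<Rightarrow> ('a \<Rightarrow> 'v) \<Rightarrow> 'a set \<Rightarrow> 'v \<Rightarrow> 'v set" where
  "reachable src trg F u = {v. \<exists>p. walk src trg F u v p}"

lemma reachable_refl: "u \<in> reachable src trg F u"
  unfolding reachable_def by (metis mem_Collect_eq walk.simps(1))

lemma reachable_step: "src a \<in> reachable src trg F u \<Longrightarrow> a \<in> F \<Longrightarrow> trg a \<in> reachable src trg F u"
  unfolding reachable_def using walk_snoc by fastforce

text \<open>Walks with tail \<open>flip_on \<Phi> src trg\<close> and head \<open>flip_on \<Phi> trg src\<close> are the walks of the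
  residual graph of the flow \<open>\<Phi>\<close>: the arcs of \<open>\<Phi>\<close> are traversed backwards.\<close>
definition flip_on :: "'a set \<Rightarrow> ('a \<Rightarrow> 'v) \<Rightarrow> ('a \<Rightarrow> 'v) \<Rightarrow> 'a \<Rightarrow> 'v" where
  "flip_on R f g a = (if a \<in> R then g a else f a)"

definition net_outflow :: "('a \<Rightarrow> 'v) \<Rightarrow> ('a \<Rightarrow> 'v) \<Rightarrow> 'a set \<Rightarrow> 'v \<Rightarrow> int" where
  "net_outflow src trg \<Phi> w = (\<Sum>a\<in>\<Phi>. of_bool (src a = w) - of_bool (trg a = w))"

text \<open>A unit-capacity s-t flow, represented by the set of arcs carrying flow.\<close>
definition is_st_flow :: "('a \<Rightarrow> 'v) \<Rightarrow> ('a \<Rightarrow> 'v) \<Rightarrow> 'v \<Rightarrow> 'v \<Rightarrow> 'a set \<Rightarrow> bool" where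
  "is_st_flow src trg s t \<Phi> \<longleftrightarrow>
     finite \<Phi> \<and> (\<forall>w. w \<noteq> s \<and> w \<noteq> t \<longrightarrow> net_outflow src trg \<Phi> w = 0)"

lemma net_outflow_eq_cut:
  assumes flow: "is_st_flow src trg s t \<Phi>" and "s \<in> A" "t \<notin> A"
  shows "net_outflow src trg \<Phi> s = (\<Sum>a\<in>\<Phi>. of_bool (src a \<in> A) - of_bool (trg a \<in> A))"
proof -
  let ?V = "A \<inter> (insert s (src ` \<Phi> \<union> trg ` \<Phi>))"
  have fin: "finite \<Phi>" "finite ?V" using flow by (auto simp: is_st_flow_def)
  have "(\<Sum>a\<in>\<Phi>. of_bool (src a \<in> A) - of_bool (trg a \<in> A) :: int)
      = (\<Sum>a\<in>\<Phi>. \<Sum>w\<in>?V. of_bool (src a = w) - of_bool (trg a = w))"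
    using fin by (intro sum.cong) (simp_all add: sum_subtractf of_bool_def sum.delta sum.delta')
  also have "\<dots> = (\<Sum>w\<in>?V. net_outflow src trg \<Phi> w)"
    unfolding net_outflow_def by (rule sum.swap)
  also have "\<dots> = net_outflow src trg \<Phi> s + (\<Sum>w\<in>?V - {s}. net_outflow src trg \<Phi> w)"
    using fin assms(2) by (subst sum.remove[of _ s]) auto
  also have "(\<Sum>w\<in>?V - {s}. net_outflow src trg \<Phi> w) = 0"
    using flow assms(3) by (intro sum.neutral) (auto simp: is_st_flow_def)
  finally show ?thesis by simp
qed

lemma net_outflow_remove_walk:
  assumes "finite \<Phi>" "walk src trg \<Phi> u v q" "distinct q"
  shows "net_outflow src trg (\<Phi> - set q) w = net_outflow src trg \<Phi> w - (of_bool (u = w) - of_bool (v = w))"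
proof -
  have "set q \<subseteq> \<Phi>" using walk_set[OF assms(2)] .
  then show ?thesis
    using assms walk_telescope[OF assms(2), of w]
    by (simp add: net_outflow_def sum_diff sum_list_distinct_conv_sum_set)
qed

lemma net_outflow_augment:
  assumes fin: "finite \<Phi>" and q: "walk (flip_on \<Phi> src trg) (flip_on \<Phi> trg src) F u v q" "distinct q"
  shows "net_outflow src trg (sym_diff \<Phi> (set q)) w
       = net_outflow src trg \<Phi> w + (of_bool (u = w) - of_bool (v = w))"
proof -
  define h where "h a = (of_bool (src a = w) - of_bool (trg a = w) :: int)" for a
  let ?Q = "set q"
  have "of_bool (u = w) - of_bool (v = w)
      = (\<Sum>a\<leftarrow>q. of_bool (flip_on \<Phi> src trg a = w) - of_bool (flip_on \<Phi> trg src a = w) :: int)"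
    by (rule walk_telescope[OF q(1), symmetric])
  also have "\<dots> = (\<Sum>a\<in>?Q. if a \<in> \<Phi> then - h a else h a)"
    using q(2) by (simp add: sum_list_distinct_conv_sum_set) (auto intro: sum.cong simp: flip_on_def h_def)
  also have "\<dots> = (\<Sum>a\<in>?Q - \<Phi>. h a) - (\<Sum>a\<in>\<Phi> \<inter> ?Q. h a)"
    by (simp add: sum.If_cases sum_negf Diff_eq Int_commute)
  finally have walk_sum: "of_bool (u = w) - of_bool (v = w) = (\<Sum>a\<in>?Q - \<Phi>. h a) - (\<Sum>a\<in>\<Phi> \<inter> ?Q. h a)" .
  have "net_outflow src trg ((\<Phi> - ?Q) \<union> (?Q - \<Phi>)) w = (\<Sum>a\<in>\<Phi> - ?Q. h a) + (\<Sum>a\<in>?Q - \<Phi>. h a)"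
    unfolding net_outflow_def h_def using fin by (intro sum.union_disjoint) auto
  moreover have "net_outflow src trg \<Phi> w = (\<Sum>a\<in>\<Phi> - ?Q. h a) + (\<Sum>a\<in>\<Phi> \<inter> ?Q. h a)"
  proof -
    have "\<Phi> - \<Phi> \<inter> ?Q = \<Phi> - ?Q" by blast
    then show ?thesis
      unfolding net_outflow_def h_def using fin sum.subset_diff[of "\<Phi> \<inter> ?Q" \<Phi>] by simp
  qed
  ultimately show ?thesis using walk_sum by simp
qed

lemma st_flow_reaches_sink:
  assumes flow: "is_st_flow src trg s t \<Phi>" and pos: "net_outflow src trg \<Phi> s > 0"
  shows "t \<in> reachable src trg \<Phi> s"
proof (rule ccontr)
  let ?A = "reachable src trg \<Phi> s"
  assume "t \<notin> ?A"
  then have "net_outflow src trg \<Phi> s = (\<Sum>a\<in>\<Phi>. of_bool (src a \<in> ?A) - of_bool (trg a \<in> ?A))"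
    using net_outflow_eq_cut[OF flow reachable_refl] by blast
  also have "\<dots> \<le> 0"
    by (rule sum_nonpos) (auto dest: reachable_step)
  finally show False using pos by simp
qed

lemma st_flow_decomposition:
  assumes "is_st_flow src trg s t \<Phi>" "s \<noteq> t" "net_outflow src trg \<Phi> s = int k"
  shows "\<exists>P \<subseteq> st_paths src trg s t \<Phi>. card P = k \<and> pairwise (\<lambda>p q. set p \<inter> set q = {}) P"
  using assms
proof (induction k arbitrary: \<Phi>)
  case 0
  then show ?case by (intro exI[of _ "{}"]) simp
next
  case (Suc k)
  have fin: "finite \<Phi>" using Suc.prems(1) by (simp add: is_st_flow_def)
  obtain p where "walk src trg \<Phi> s t p"
    using st_flow_reaches_sink[OF Suc.prems(1)] Suc.prems(3) by (auto simp: reachable_def)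
  from walk_shortcut[OF this]
  obtain q where q: "walk src trg \<Phi> s t q" "distinct (s # map trg q)" by blast
  have q_path: "q \<in> st_paths src trg s t \<Phi>"
    using q Suc.prems(2) by (cases q) (auto simp: st_paths_def is_st_path_iff_walk)
  have "distinct q" using q(2) by (simp add: distinct_map)
  note outflow = net_outflow_remove_walk[OF fin q(1) this]
  have "is_st_flow src trg s t (\<Phi> - set q)" "net_outflow src trg (\<Phi> - set q) s = int k"
    using Suc.prems fin outflow by (auto simp: is_st_flow_def)
  then obtain P where P: "P \<subseteq> st_paths src trg s t (\<Phi> - set q)" "card P = k"
    "pairwise (\<lambda>p q. set p \<inter> set q = {}) P"
    using Suc.IH Suc.prems(2) by blast
  have disj: "set p \<inter> set q = {}" if "p \<in> P" for p
    using that P(1) by (auto simp: st_paths_def is_st_path_def)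
  have "q \<notin> P"
  proof
    assume "q \<in> P"
    then have "q = []" using disj[of q] by simp
    then show False using q_path by (simp add: st_paths_def is_st_path_def)
  qed
  moreover have "finite P"
    using finite_subset[OF P(1) finite_st_paths] fin by simp
  moreover have "st_paths src trg s t (\<Phi> - set q) \<subseteq> st_paths src trg s t \<Phi>"
    by (rule st_paths_mono) blast
  ultimately show ?case
    using P disj q_path by (intro exI[of _ "insert q P"]) (auto simp: pairwise_insert Int_commute)
qed

lemma augment_st_flow:
  assumes flow: "is_st_flow src trg s t \<Phi>" and "s \<noteq> t"
    and q: "walk (flip_on \<Phi> src trg) (flip_on \<Phi> trg src) F s t q" "distinct q"
  shows "is_st_flow src trg s t (sym_diff \<Phi> (set q))"
    and "net_outflow src trg (sym_diff \<Phi> (set q)) s = net_outflow src trg \<Phi> s + 1"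
  using net_outflow_augment[OF _ q] flow \<open>s \<noteq> t\<close> by (auto simp: is_st_flow_def)

definition is_max_st_flow :: "('a \<Rightarrow> 'v) \<Rightarrow> ('a \<Rightarrow> 'v) \<Rightarrow> 'v \<Rightarrow> 'v \<Rightarrow> 'a set \<Rightarrow> 'a set \<Rightarrow> bool" where
  "is_max_st_flow src trg s t F \<Phi> \<longleftrightarrow> \<Phi> \<subseteq> F \<and> is_st_flow src trg s t \<Phi> \<and>
     (\<forall>\<Psi>. \<Psi> \<subseteq> F \<longrightarrow> is_st_flow src trg s t \<Psi> \<longrightarrow> net_outflow src trg \<Psi> s \<le> net_outflow src trg \<Phi> s)"

lemma ex_max_st_flow:
  assumes "finite F"
  shows "\<exists>\<Phi>. is_max_st_flow src trg s t F \<Phi>"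
proof -
  let ?flows = "{\<Phi>. \<Phi> \<subseteq> F \<and> is_st_flow src trg s t \<Phi>}"
  let ?value = "\<lambda>\<Phi>. net_outflow src trg \<Phi> s"
  have "finite (?value ` ?flows)" using assms by simp
  moreover have "{} \<in> ?flows" by (simp add: is_st_flow_def net_outflow_def)
  ultimately have "Max (?value ` ?flows) \<in> ?value ` ?flows"
    and "\<And>\<Psi>. \<Psi> \<in> ?flows \<Longrightarrow> ?value \<Psi> \<le> Max (?value ` ?flows)"
    by (auto intro: Max_in)
  then show ?thesis unfolding is_max_st_flow_def by auto
qed

lemma max_st_flow_no_augmenting_path:
  assumes max: "is_max_st_flow src trg s t F \<Phi>" and "s \<noteq> t"
  shows "t \<notin> reachable (flip_on \<Phi> src trg) (flip_on \<Phi> trg src) F s"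
proof
  assume "t \<in> reachable (flip_on \<Phi> src trg) (flip_on \<Phi> trg src) F s"
  then obtain p where "walk (flip_on \<Phi> src trg) (flip_on \<Phi> trg src) F s t p"
    unfolding reachable_def by blast
  from walk_shortcut[OF this] obtain q
    where q: "walk (flip_on \<Phi> src trg) (flip_on \<Phi> trg src) F s t q"
      "distinct (s # map (flip_on \<Phi> trg src) q)" by blast
  then have "distinct q" by (simp add: distinct_map)
  have flow: "\<Phi> \<subseteq> F" "is_st_flow src trg s t \<Phi>" using max by (simp_all add: is_max_st_flow_def)
  note augmented = augment_st_flow[OF flow(2) \<open>s \<noteq> t\<close> q(1) \<open>distinct q\<close>]
  have "sym_diff \<Phi> (set q) \<subseteq> F" using flow(1) walk_set[OF q(1)] by blast
  then have "net_outflow src trg (sym_diff \<Phi> (set q)) s \<le> net_outflow src trg \<Phi> s"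
    using max augmented(1) unfolding is_max_st_flow_def by blast
  then show False using augmented(2) by simp
qed

lemma max_st_flow_value_eq_cut:
  assumes max: "is_max_st_flow src trg s t F \<Phi>" and "s \<noteq> t"
  defines "A \<equiv> reachable (flip_on \<Phi> src trg) (flip_on \<Phi> trg src) F s"
  shows "net_outflow src trg \<Phi> s = int (card {a\<in>F. src a \<in> A \<and> trg a \<notin> A})"
proof -
  let ?D = "{a\<in>F. src a \<in> A \<and> trg a \<notin> A}"
  have flow: "\<Phi> \<subseteq> F" "is_st_flow src trg s t \<Phi>" using max by (simp_all add: is_max_st_flow_def)
  have leaving: "a \<in> \<Phi>" if "a \<in> F" "src a \<in> A" "trg a \<notin> A" for a
  proof (rule ccontr)
    assume "a \<notin> \<Phi>"
    then have "flip_on \<Phi> src trg a = src a" "flip_on \<Phi> trg src a = trg a"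
      by (simp_all add: flip_on_def)
    then show False
      using that reachable_step[of "flip_on \<Phi> src trg" a "flip_on \<Phi> trg src" F s]
      unfolding A_def by simp
  qed
  have entering: "src a \<in> A" if "a \<in> \<Phi>" "trg a \<in> A" for a
  proof -
    have "flip_on \<Phi> src trg a = trg a" "flip_on \<Phi> trg src a = src a" "a \<in> F"
      using that flow(1) by (auto simp: flip_on_def)
    then show ?thesis
      using that reachable_step[of "flip_on \<Phi> src trg" a "flip_on \<Phi> trg src" F s]
      unfolding A_def by simp
  qed
  have "s \<in> A" unfolding A_def by (rule reachable_refl)
  moreover have "t \<notin> A" unfolding A_def by (rule max_st_flow_no_augmenting_path[OF max \<open>s \<noteq> t\<close>])
  ultimately have "net_outflow src trg \<Phi> s = (\<Sum>a\<in>\<Phi>. of_bool (src a \<in> A) - of_bool (trg a \<in> A))"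
    by (rule net_outflow_eq_cut[OF flow(2)])
  also have "\<dots> = (\<Sum>a\<in>\<Phi>. of_bool (a \<in> ?D))"
    using flow(1) entering by (intro sum.cong) auto
  also have "\<dots> = int (card ?D)"
  proof -
    have "?D \<subseteq> \<Phi>" using leaving by blast
    then show ?thesis using flow(2) by (simp add: is_st_flow_def Int_absorb1)
  qed
  finally show ?thesis .
qed

theorem menger_arc_disjoint:
  assumes "finite F" and "s \<noteq> t"
  obtains A P where "s \<in> A" "t \<notin> A" "P \<subseteq> st_paths src trg s t F"
    "pairwise (\<lambda>p q. set p \<inter> set q = {}) P" "card P = card {a\<in>F. src a \<in> A \<and> trg a \<notin> A}"
proof -
  obtain \<Phi> where max: "is_max_st_flow src trg s t F \<Phi>" using ex_max_st_flow[OF assms(1), of src trg s t] by blast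
  define A where "A = reachable (flip_on \<Phi> src trg) (flip_on \<Phi> trg src) F s"
  have flow: "\<Phi> \<subseteq> F" "is_st_flow src trg s t \<Phi>" using max by (simp_all add: is_max_st_flow_def)
  obtain P where P: "P \<subseteq> st_paths src trg s t \<Phi>" "card P = card {a\<in>F. src a \<in> A \<and> trg a \<notin> A}"
    "pairwise (\<lambda>p q. set p \<inter> set q = {}) P"
    using st_flow_decomposition[OF flow(2) \<open>s \<noteq> t\<close> max_st_flow_value_eq_cut[OF max \<open>s \<noteq> t\<close>]]
    unfolding A_def by blast
  show thesis
  proof (rule that)
    show "s \<in> A" unfolding A_def by (rule reachable_refl)
    show "t \<notin> A" unfolding A_def by (rule max_st_flow_no_augmenting_path[OF max \<open>s \<noteq> t\<close>])
    show "P \<subseteq> st_paths src trg s t F" using P(1) st_paths_mono[OF flow(1)] by (rule subset_trans)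
  qed (use P in auto)
qed

section \<open>Cuts constrained to \<open>N\<close>\<close>

lemma st_path_map:
  "p \<in> st_paths (src \<circ> f) (trg \<circ> f) s t F \<Longrightarrow> map f p \<in> st_paths src trg s t (f ` F)"
  by (auto simp: st_paths_def is_st_path_iff_walk walk_map distinct_map map_map[symmetric]
      simp del: map_map)

lemma card_le_card_hitting_set:
  assumes "finite C" "\<forall>p\<in>P. set p \<inter> C \<noteq> {}" "pairwise (\<lambda>p q. set p \<inter> set q \<inter> C = {}) P"
  shows "card P \<le> card C"
proof -
  have "\<forall>p\<in>P. \<exists>a. a \<in> set p \<inter> C" using assms(2) by blast
  then obtain f where f: "\<forall>p\<in>P. f p \<in> set p \<inter> C" by (rule bchoice[THEN exE])
  have "inj_on f P"
  proof (rule inj_onI)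
    fix p q assume "p \<in> P" "q \<in> P" "f p = f q"
    then have "f p \<in> set p \<inter> set q \<inter> C" using f by (metis IntD1 IntD2 IntI)
    then show "p = q" using assms(3) \<open>p \<in> P\<close> \<open>q \<in> P\<close> unfolding pairwise_def by blast
  qed
  then show ?thesis using f by (intro card_inj_on_le[OF _ _ assms(1)]) auto
qed

lemma card_subsets_eq_image: "{card P | P. P \<subseteq> X \<and> R P} = card ` {P. P \<subseteq> X \<and> R P}"
  by blast

lemma card_le_Max_card:
  assumes "finite X" "P \<subseteq> X" "R P"
  shows "card P \<le> Max {card P | P. P \<subseteq> X \<and> R P}"
  unfolding card_subsets_eq_image using assms by (intro Max_ge) auto

lemma Max_card_attained:
  assumes "finite X" "R {}"
  obtains P where "P \<subseteq> X" "R P" "card P = Max {card P | P. P \<subseteq> X \<and> R P}"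
proof -
  let ?S = "{P. P \<subseteq> X \<and> R P}"
  have "Max (card ` ?S) \<in> card ` ?S" using assms by (intro Max_in) auto
  then show thesis using that unfolding card_subsets_eq_image by auto
qed

lemma Max_card_le:
  assumes "finite X" "R {}" "\<And>P. P \<subseteq> X \<Longrightarrow> R P \<Longrightarrow> card P \<le> b"
  shows "Max {card P | P. P \<subseteq> X \<and> R P} \<le> b"
proof -
  obtain P where P: "P \<subseteq> X" "R P" "card P = Max {card P | P. P \<subseteq> X \<and> R P}"
    by (rule Max_card_attained[of X R, OF assms(1,2)])
  then show ?thesis using assms(3)[OF P(1,2)] by simp
qed

lemma last_index_in_setE:
  assumes "set p \<inter> C \<noteq> {}"
  obtains k where "k < length p" "p ! k \<in> C" "set (drop k p) \<inter> C = {p ! k}"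
proof -
  let ?K = "{k. k < length p \<and> p ! k \<in> C}"
  have K: "finite ?K" "?K \<noteq> {}" using assms by (auto simp: in_set_conv_nth)
  define k where "k = Max ?K"
  have k: "k < length p" "p ! k \<in> C" using Max_in[OF K] unfolding k_def by auto
  have "a = p ! k" if a: "a \<in> set (drop k p)" "a \<in> C" for a
  proof -
    obtain j where j: "j < length p - k" "p ! (k + j) = a"
      using a(1) by (auto simp: in_set_conv_nth)
    then have "k + j \<le> k" using Max_ge[OF K(1), of "k + j"] a(2) unfolding k_def by auto
    then show ?thesis using j by simp
  qed
  moreover have "p ! k \<in> set (drop k p)" using k(1) by (metis Cons_nth_drop_Suc list.set_intros(1))
  ultimately show thesis using that k by blast
qed

lemma incidence_vec_nth: "incidence_vec C $ i = (if i \<in> C then 1 else 0)"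
  by (simp add: incidence_vec_def)

lemma sum_incidence_vec: "(\<Sum>i\<in>S. incidence_vec C $ i) = real (card (S \<inter> C))"
  for S :: "'e::finite set"
  by (simp add: incidence_vec_nth sum.If_cases)

lemma eq_incidence_vec_if_ge_one:
  fixes x :: "real ^ 'e::finite"
  assumes nonneg: "\<forall>i. 0 \<le> x $ i" and support: "\<forall>i. i \<notin> N \<longrightarrow> x $ i = 0"
    and "C \<subseteq> N" and total: "(\<Sum>i\<in>N. x $ i) = card C" and ge_one: "\<forall>i\<in>C. 1 \<le> x $ i"
  shows "x = incidence_vec C"
proof -
  have split: "(\<Sum>i\<in>N. x $ i) = (\<Sum>i\<in>N - C. x $ i) + (\<Sum>i\<in>C. x $ i - 1) + card C"
    using sum.subset_diff[OF \<open>C \<subseteq> N\<close>] by (simp add: sum_subtractf)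
  have "(\<Sum>i\<in>N - C. x $ i) \<ge> 0" "(\<Sum>i\<in>C. x $ i - 1) \<ge> 0"
    using nonneg ge_one by (simp_all add: sum_nonneg)
  then have "(\<Sum>i\<in>N - C. x $ i) = 0" "(\<Sum>i\<in>C. x $ i - 1) = 0"
    using split total by linarith+
  then have "\<forall>i\<in>N - C. x $ i = 0" "\<forall>i\<in>C. x $ i = 1"
    using nonneg ge_one by (simp_all add: sum_nonneg_eq_0_iff)
  then show ?thesis using support \<open>C \<subseteq> N\<close> by (auto simp: vec_eq_iff incidence_vec_nth)
qed

definition path_weight :: "real ^ 'e::finite \<Rightarrow> 'e list \<Rightarrow> real" where
  "path_weight x p = (\<Sum>i\<in>set p. x $ i)"

definition copies_of_public_arcs :: "'e set \<Rightarrow> 'e set \<Rightarrow> nat \<Rightarrow> ('e \<times> nat) set" where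
  "copies_of_public_arcs E N K = {(a, i). a \<in> E \<and> (if a \<in> N then i = 0 else i < K)}"

lemma copy_paths_eq_if_shared_private_arc:
  assumes P: "P \<subseteq> st_paths (src \<circ> fst) (trg \<circ> fst) s t (copies_of_public_arcs E N K)"
    and disjoint: "pairwise (\<lambda>p q. set p \<inter> set q = {}) P"
    and pq: "p \<in> P" "q \<in> P" and a: "a \<in> set (map fst p)" "a \<in> set (map fst q)" "a \<in> N"
  shows "p = q"
proof -
  have zero_copy: "(a, 0) \<in> set p'" if "p' \<in> P" "a \<in> set (map fst p')" for p'
  proof -
    from that(2) obtain x where x: "x \<in> set p'" "fst x = a" by auto
    moreover have "x \<in> copies_of_public_arcs E N K"
      using x(1) st_path_set[OF subsetD[OF P that(1)]] by blast
    ultimately show ?thesis using a(3) by (auto simp: copies_of_public_arcs_def)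
  qed
  show "p = q"
  proof (rule ccontr)
    assume "p \<noteq> q"
    then have "set p \<inter> set q = {}" using pairwiseD[OF disjoint pq] by simp
    then show False using zero_copy[OF pq(1) a(1)] zero_copy[OF pq(2) a(2)] by blast
  qed
qed

locale network =
  fixes src trg :: "'e::finite \<Rightarrow> 'v" and s t :: 'v and E N :: "'e set"
  assumes s_ne_t: "s \<noteq> t"
    and N_subset_E: "N \<subseteq> E"
    and st_paths_meet_N: "\<forall>p \<in> st_paths src trg s t E. set p \<inter> N \<noteq> {}"
begin

abbreviation paths :: "'e list set" where
  "paths \<equiv> st_paths src trg s t E"

abbreviation \<sigma> :: nat where
  "\<sigma> \<equiv> sigmaN src trg s t E N"

lemma card_le_sigmaN:
  "P \<subseteq> paths \<Longrightarrow> pairwise (\<lambda>p q. set p \<inter> set q \<inter> N = {}) P \<Longrightarrow> card P \<le> \<sigma>"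
  using card_le_Max_card[of paths P "pairwise (\<lambda>p q. set p \<inter> set q \<inter> N = {})"]
  by (simp add: sigmaN_def finite_st_paths)

lemma sigmaN_attained:
  obtains P where "P \<subseteq> paths" "pairwise (\<lambda>p q. set p \<inter> set q \<inter> N = {}) P" "card P = \<sigma>"
proof -
  have "finite paths" by (simp add: finite_st_paths)
  from Max_card_attained[OF this, of "pairwise (\<lambda>p q. set p \<inter> set q \<inter> N = {})"]
  show thesis using that unfolding sigmaN_def by auto
qed

lemma sigmaN_le_card_cut: "is_cut_N src trg s t E N C \<Longrightarrow> \<sigma> \<le> card C"
proof -
  assume cut: "is_cut_N src trg s t E N C"
  obtain P where P: "P \<subseteq> paths" "pairwise (\<lambda>p q. set p \<inter> set q \<inter> N = {}) P" "card P = \<sigma>"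
    by (rule sigmaN_attained)
  have "\<forall>p\<in>P. set p \<inter> C \<noteq> {}" "pairwise (\<lambda>p q. set p \<inter> set q \<inter> C = {}) P"
    using cut P(1,2) unfolding is_cut_N_def pairwise_def by blast+
  then show ?thesis using card_le_card_hitting_set[of C P] P(3) by simp
qed

lemma card_arc_disjoint_copies_le_sigmaN:
  assumes P: "P \<subseteq> st_paths (src \<circ> fst) (trg \<circ> fst) s t (copies_of_public_arcs E N K)"
    and disjoint: "pairwise (\<lambda>p q. set p \<inter> set q = {}) P"
  shows "card P \<le> \<sigma>"
proof -
  note shared_private_arc = copy_paths_eq_if_shared_private_arc[OF P disjoint]
  have in_paths: "map fst p \<in> paths" if "p \<in> P" for p
  proof -
    have "fst ` copies_of_public_arcs E N K \<subseteq> E" by (auto simp: copies_of_public_arcs_def)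
    moreover have "map fst p \<in> st_paths src trg s t (fst ` copies_of_public_arcs E N K)"
      using st_path_map subsetD[OF P that] .
    ultimately show ?thesis by (rule subsetD[OF st_paths_mono])
  qed
  have "inj_on (map fst) P"
  proof (rule inj_onI)
    fix p q assume pq: "p \<in> P" "q \<in> P" "map fst p = map fst q"
    have "set (map fst p) \<inter> N \<noteq> {}" using st_paths_meet_N in_paths[OF pq(1)] by blast
    then obtain a where "a \<in> set (map fst p)" "a \<in> N" by blast
    then show "p = q" using shared_private_arc[OF pq(1,2)] pq(3) by simp
  qed
  moreover have "card (map fst ` P) \<le> \<sigma>"
  proof (rule card_le_sigmaN)
    show "map fst ` P \<subseteq> paths" using in_paths by (rule image_subsetI)
    show "pairwise (\<lambda>p q. set p \<inter> set q \<inter> N = {}) (map fst ` P)"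
    proof (rule pairwiseI)
      fix x y assume "x \<in> map fst ` P" "y \<in> map fst ` P" "x \<noteq> y"
      then obtain p q where pq: "p \<in> P" "q \<in> P" "x = map fst p" "y = map fst q" "p \<noteq> q"
        by (auto elim!: imageE)
      have "set (map fst p) \<inter> set (map fst q) \<inter> N = {}"
        using shared_private_arc[OF pq(1,2)] pq(5) by blast
      then show "set x \<inter> set y \<inter> N = {}" using pq(3,4) by simp
    qed
  qed
  ultimately show ?thesis by (simp add: card_image)
qed

text \<open>Replacing each public arc by \<open>\<sigma> + 1\<close> parallel copies makes public arcs too expensive
  for a minimum cut of the copied network.\<close>
lemma exists_cut_N_card_le_sigmaN:
  obtains C where "is_cut_N src trg s t E N C" "card C \<le> \<sigma>"
proof -
  define K where "K = Suc \<sigma>"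
  let ?F = "copies_of_public_arcs E N K"
  have "?F \<subseteq> UNIV \<times> {..K}" by (auto simp: copies_of_public_arcs_def)
  then have "finite ?F" by (rule finite_subset) simp
  then obtain A P where A: "s \<in> A" "t \<notin> A"
    and P: "P \<subseteq> st_paths (src \<circ> fst) (trg \<circ> fst) s t ?F" "pairwise (\<lambda>p q. set p \<inter> set q = {}) P"
    and card_P: "card P = card {x\<in>?F. src (fst x) \<in> A \<and> trg (fst x) \<notin> A}"
    using menger_arc_disjoint[of ?F s t "src \<circ> fst" "trg \<circ> fst"] s_ne_t by auto
  let ?D = "{x\<in>?F. src (fst x) \<in> A \<and> trg (fst x) \<notin> A}"
  have card_D: "card ?D \<le> \<sigma>"
    using card_arc_disjoint_copies_le_sigmaN[OF P] card_P by simp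
  have public: "\<not> (src a \<in> A \<and> trg a \<notin> A)" if "a \<in> E" "a \<notin> N" for a
  proof
    assume "src a \<in> A \<and> trg a \<notin> A"
    then have "(\<lambda>i. (a, i)) ` {..<K} \<subseteq> ?D" using that by (auto simp: copies_of_public_arcs_def)
    then have "card ((\<lambda>i. (a, i)) ` {..<K}) \<le> card ?D" by (intro card_mono) (simp_all add: \<open>finite ?F\<close>)
    then show False using card_D by (simp add: card_image inj_on_def K_def)
  qed
  define C where "C = {a\<in>N. src a \<in> A \<and> trg a \<notin> A}"
  have "is_cut_N src trg s t E N C"
    unfolding is_cut_N_def
  proof (intro conjI ballI)
    fix p assume "p \<in> paths"
    then have p: "walk src trg E s t p" by (simp add: st_paths_def is_st_path_iff_walk)
    then obtain a where "a \<in> set p" "src a \<in> A" "trg a \<notin> A"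
      using walk_crosses[OF p A] by blast
    moreover have "a \<in> E" using walk_set[OF p] \<open>a \<in> set p\<close> by blast
    ultimately show "set p \<inter> C \<noteq> {}" using public unfolding C_def by blast
  qed (auto simp: C_def)
  moreover have "(\<lambda>a. (a, 0)) ` C \<subseteq> ?D"
    using N_subset_E by (auto simp: C_def copies_of_public_arcs_def)
  then have "card C \<le> card ?D"
    using card_inj_on_le[of "\<lambda>a. (a, 0)" C ?D] \<open>finite ?F\<close> by (auto simp: inj_on_def)
  ultimately show thesis using that card_D by simp
qed

lemma card_min_cut_N: "is_min_cut_N src trg s t E N C \<Longrightarrow> card C = \<sigma>"
  using exists_cut_N_card_le_sigmaN sigmaN_le_card_cut unfolding is_min_cut_N_def
  by (metis le_antisym le_trans)

lemma gamma_le_card_cut: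
  assumes cut: "is_cut_N src trg s t E N C" and "S \<subseteq> N"
  shows "gamma src trg s t E N S \<le> card (C \<inter> S)"
  unfolding gamma_def
proof (rule Max_card_le)
  fix P assume P: "P \<subseteq> st_paths src trg s t (S \<union> (E - N))" "pairwise (\<lambda>p q. set p \<inter> set q = {}) P"
  have "set p \<inter> (C \<inter> S) \<noteq> {}" if "p \<in> P" for p
  proof -
    have "S \<union> (E - N) \<subseteq> E" using \<open>S \<subseteq> N\<close> N_subset_E by blast
    then have "p \<in> paths" using subsetD[OF st_paths_mono subsetD[OF P(1) that]] by blast
    then have "set p \<inter> C \<noteq> {}" using cut by (simp add: is_cut_N_def)
    moreover have "set p \<subseteq> S \<union> (E - N)" by (rule st_path_set[OF subsetD[OF P(1) that]])
    ultimately show ?thesis using cut by (auto simp: is_cut_N_def)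
  qed
  moreover have "pairwise (\<lambda>p q. set p \<inter> set q \<inter> (C \<inter> S) = {}) P"
    using P(2) by (auto simp: pairwise_def)
  ultimately show "card P \<le> card (C \<inter> S)" by (intro card_le_card_hitting_set) auto
qed (simp_all add: finite_st_paths)

lemma one_le_gamma_tilde:
  assumes "p \<in> paths"
  shows "1 \<le> gamma_tilde src trg s t E N (set p \<inter> N)"
proof (cases "set p \<inter> N = N")
  case True
  have "card {p} \<le> \<sigma>" using assms by (intro card_le_sigmaN) auto
  then show ?thesis using True by (simp add: gamma_tilde_def)
next
  case False
  have "p \<in> st_paths src trg s t (set p \<inter> N \<union> (E - N))"
    using assms st_path_set[OF assms] by (auto simp: st_paths_def is_st_path_def)
  then have "card {p} \<le> gamma src trg s t E N (set p \<inter> N)"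
    unfolding gamma_def by (intro card_le_Max_card) (simp_all add: finite_st_paths)
  then show ?thesis using False by (simp add: gamma_tilde_def)
qed

lemma incidence_vec_min_cut_in_core:
  assumes "is_min_cut_N src trg s t E N C"
  shows "incidence_vec C \<in> core_tilde src trg s t E N"
proof -
  have cut: "is_cut_N src trg s t E N C" and "C \<subseteq> N"
    using assms by (auto simp: is_min_cut_N_def is_cut_N_def)
  have "gamma_tilde src trg s t E N S \<le> card (S \<inter> C)" if "S \<subseteq> N" for S
  proof (cases "S = N")
    case True
    then show ?thesis using card_min_cut_N[OF assms] \<open>C \<subseteq> N\<close>
      by (simp add: gamma_tilde_def Int_absorb1)
  next
    case False
    then show ?thesis using gamma_le_card_cut[OF cut that] by (simp add: gamma_tilde_def Int_commute)
  qed
  then show ?thesis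
    unfolding core_tilde_def mem_Collect_eq sum_incidence_vec
    using \<open>C \<subseteq> N\<close> card_min_cut_N[OF assms] by (auto simp: incidence_vec_nth Int_absorb1)
qed

lemma convex_core_tilde: "convex (core_tilde src trg s t E N)"
proof (rule convexI)
  fix x y :: "real ^ 'e" and u v :: real
  assume x: "x \<in> core_tilde src trg s t E N" and y: "y \<in> core_tilde src trg s t E N"
    and uv: "0 \<le> u" "0 \<le> v" "u + v = 1"
  have sum_comb: "(\<Sum>i\<in>S. (u *\<^sub>R x + v *\<^sub>R y) $ i) = u * (\<Sum>i\<in>S. x $ i) + v * (\<Sum>i\<in>S. y $ i)" for S
    by (simp add: sum.distrib sum_distrib_left)
  have comb_ge: "c \<le> u * a + v * b" if "c \<le> a" "c \<le> b" for a b c :: real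
    using convex_bound_le[of "-a" "-c" "-b" u v] that uv by simp
  have comb_eq: "u * c + v * c = c" for c :: real
    using uv by (metis distrib_right mult_1)
  note x = x[unfolded core_tilde_def mem_Collect_eq] and y = y[unfolded core_tilde_def mem_Collect_eq]
  show "u *\<^sub>R x + v *\<^sub>R y \<in> core_tilde src trg s t E N"
    unfolding core_tilde_def mem_Collect_eq sum_comb
  proof (intro conjI allI impI ballI)
    show "(u *\<^sub>R x + v *\<^sub>R y) $ i = 0" if "i \<notin> N" for i using x y that by simp
    show "0 \<le> (u *\<^sub>R x + v *\<^sub>R y) $ i" if "i \<in> N" for i using x y that comb_ge[of 0] by simp
    show "u * (\<Sum>i\<in>N. x $ i) + v * (\<Sum>i\<in>N. y $ i) = real \<sigma>" using x y comb_eq by simp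
    show "real (gamma_tilde src trg s t E N S) \<le> u * (\<Sum>i\<in>S. x $ i) + v * (\<Sum>i\<in>S. y $ i)"
      if "S \<subseteq> N" for S using x y that by (intro comb_ge) auto
  qed
qed

lemma convex_hull_min_cuts_subset_core:
  "convex hull {incidence_vec C | C. is_min_cut_N src trg s t E N C} \<subseteq> core_tilde src trg s t E N"
  using incidence_vec_min_cut_in_core by (intro hull_minimal convex_core_tilde) blast

section \<open>Core vectors are convex combinations of minimum cuts\<close>

definition fractional_min_cut :: "real ^ 'e \<Rightarrow> bool" where
  "fractional_min_cut x \<longleftrightarrow>
     (\<forall>i. 0 \<le> x $ i) \<and> (\<forall>i. i \<notin> N \<longrightarrow> x $ i = 0) \<and> (\<Sum>i\<in>N. x $ i) = \<sigma> \<and>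
     (\<forall>p\<in>paths. 1 \<le> path_weight x p)"

lemma core_tilde_fractional_min_cut:
  assumes "x \<in> core_tilde src trg s t E N"
  shows "fractional_min_cut x"
proof -
  note x = assms[unfolded core_tilde_def mem_Collect_eq]
  have nonneg: "0 \<le> x $ i" for i using x by (cases "i \<in> N") auto
  have "1 \<le> path_weight x p" if "p \<in> paths" for p
  proof -
    have "1 \<le> real (gamma_tilde src trg s t E N (set p \<inter> N))"
      using one_le_gamma_tilde[OF that] by simp
    also have "\<dots> \<le> (\<Sum>i\<in>set p \<inter> N. x $ i)" using x by blast
    also have "\<dots> = path_weight x p"
      unfolding path_weight_def using x by (intro sum.mono_neutral_left) auto
    finally show ?thesis .
  qed
  then show ?thesis using x nonneg unfolding fractional_min_cut_def by blast
qed

definition zero_reachable :: "real ^ 'e \<Rightarrow> 'v set" where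
  "zero_reachable x = reachable src trg {a\<in>E. x $ a = 0} s"

definition zero_cut :: "real ^ 'e \<Rightarrow> 'e set" where
  "zero_cut x = {a\<in>E. src a \<in> zero_reachable x \<and> trg a \<notin> zero_reachable x}"

lemma one_le_weight_walk_from_zero_reachable:
  assumes x: "fractional_min_cut x" and "v \<in> zero_reachable x" and q: "walk src trg E v t q"
  shows "1 \<le> (\<Sum>i\<in>set q. x $ i)"
proof -
  obtain w where w: "walk src trg {a\<in>E. x $ a = 0} s v w"
    using \<open>v \<in> zero_reachable x\<close> unfolding zero_reachable_def reachable_def by blast
  have "walk src trg E s v w" using walk_mono[OF w] walk_set[OF w] by blast
  from walk_shortcut[OF walk_append[OF this q]]
  obtain r where r: "walk src trg E s t r" "set r \<subseteq> set w \<union> set q" "distinct (s # map trg r)"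
    by auto
  have "r \<in> paths"
    using r s_ne_t by (cases r) (auto simp: st_paths_def is_st_path_iff_walk)
  then have "1 \<le> path_weight x r" using x by (simp add: fractional_min_cut_def)
  also have "\<dots> \<le> (\<Sum>i\<in>set w \<union> set q. x $ i)"
    unfolding path_weight_def using r(2) x by (intro sum_mono2) (auto simp: fractional_min_cut_def)
  also have "\<dots> = (\<Sum>i\<in>set q. x $ i)"
    using walk_set[OF w] by (intro sum.mono_neutral_right) auto
  finally show ?thesis .
qed

lemma t_notin_zero_reachable: "fractional_min_cut x \<Longrightarrow> t \<notin> zero_reachable x"
  using one_le_weight_walk_from_zero_reachable[of x t "[]"] by auto

lemma zero_cut_positive:
  assumes x: "fractional_min_cut x" and "a \<in> zero_cut x"
  shows "a \<in> N" and "0 < x $ a"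
proof -
  have "x $ a \<noteq> 0"
  proof
    assume "x $ a = 0"
    then have "trg a \<in> zero_reachable x"
      using \<open>a \<in> zero_cut x\<close> reachable_step unfolding zero_cut_def zero_reachable_def by fastforce
    then show False using \<open>a \<in> zero_cut x\<close> unfolding zero_cut_def by blast
  qed
  then show "a \<in> N" "0 < x $ a"
    using x unfolding fractional_min_cut_def by (metis less_eq_real_def)+
qed

lemma zero_cut_is_cut:
  assumes x: "fractional_min_cut x"
  shows "is_cut_N src trg s t E N (zero_cut x)"
  unfolding is_cut_N_def
proof (intro conjI ballI)
  show "zero_cut x \<subseteq> N" using zero_cut_positive[OF x] by blast
  fix p assume "p \<in> paths"
  then have p: "walk src trg E s t p" by (simp add: st_paths_def is_st_path_iff_walk)
  have "s \<in> zero_reachable x" by (simp add: zero_reachable_def reachable_refl)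
  then obtain a where "a \<in> set p" "src a \<in> zero_reachable x" "trg a \<notin> zero_reachable x"
    using walk_crosses[OF p _ t_notin_zero_reachable[OF x]] by blast
  moreover have "a \<in> E" using walk_set[OF p] \<open>a \<in> set p\<close> by blast
  ultimately show "set p \<inter> zero_cut x \<noteq> {}" unfolding zero_cut_def by blast
qed

text \<open>For \<open>e\<close> take the last arc of \<open>p\<close> in the zero cut: the suffix of \<open>p\<close> from \<open>e\<close> on starts in
  the zero-reachable set, so it weighs at least 1, and it contains no other arc of the zero cut.\<close>
lemma zero_cut_crossings:
  assumes x: "fractional_min_cut x" and p: "p \<in> paths"
  obtains e where "e \<in> set p \<inter> zero_cut x"
    "1 + (\<Sum>a\<in>set p \<inter> zero_cut x - {e}. x $ a) \<le> path_weight x p"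
proof -
  let ?C = "zero_cut x"
  have "set p \<inter> ?C \<noteq> {}" using zero_cut_is_cut[OF x] p by (simp add: is_cut_N_def)
  then obtain k where k: "k < length p" "p ! k \<in> ?C" and last: "set (drop k p) \<inter> ?C = {p ! k}"
    by (rule last_index_in_setE)
  have "walk src trg E s t p" using p by (simp add: st_paths_def is_st_path_iff_walk)
  then have "walk src trg E (src (p ! k)) t (drop k p)" by (rule walk_drop[OF _ k(1)])
  moreover have "src (p ! k) \<in> zero_reachable x" using k(2) by (simp add: zero_cut_def)
  ultimately have suffix: "1 \<le> (\<Sum>a\<in>set (drop k p). x $ a)"
    using one_le_weight_walk_from_zero_reachable[OF x] by blast
  have "set (drop k p) \<inter> (set p \<inter> ?C - {p ! k}) = {}" using last by blast
  then have "(\<Sum>a\<in>set (drop k p). x $ a) + (\<Sum>a\<in>set p \<inter> ?C - {p ! k}. x $ a)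
      = (\<Sum>a\<in>set (drop k p) \<union> (set p \<inter> ?C - {p ! k}). x $ a)"
    by (simp add: sum.union_disjoint)
  also have "\<dots> \<le> path_weight x p"
    unfolding path_weight_def using x set_drop_subset[of k p]
    by (intro sum_mono2) (auto simp: fractional_min_cut_def)
  finally show thesis using that[of "p ! k"] k suffix by simp
qed

lemma card_zero_cut_inter_le_1:
  assumes x: "fractional_min_cut x" and p: "p \<in> paths" and tight: "path_weight x p = 1"
  shows "card (set p \<inter> zero_cut x) \<le> 1"
proof -
  obtain e where e: "e \<in> set p \<inter> zero_cut x"
    and weight: "1 + (\<Sum>a\<in>set p \<inter> zero_cut x - {e}. x $ a) \<le> path_weight x p"
    by (rule zero_cut_crossings[OF x p])
  have "set p \<inter> zero_cut x - {e} = {}"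
  proof (rule ccontr)
    assume "set p \<inter> zero_cut x - {e} \<noteq> {}"
    then have "0 < (\<Sum>a\<in>set p \<inter> zero_cut x - {e}. x $ a)"
      using zero_cut_positive(2)[OF x] by (intro sum_pos) auto
    then show False using weight tight by simp
  qed
  then have "set p \<inter> zero_cut x \<subseteq> {e}" by blast
  then show ?thesis using card_mono[of "{e}"] by fastforce
qed

lemma fractional_min_cut_tight_paths:
  assumes x: "fractional_min_cut x"
  obtains P where "P \<subseteq> paths" "card P = \<sigma>" "\<forall>p\<in>P. path_weight x p = 1"
    "\<forall>i\<in>N. x $ i \<noteq> 0 \<longrightarrow> (\<exists>p\<in>P. i \<in> set p)"
proof -
  obtain P where P: "P \<subseteq> paths" "pairwise (\<lambda>p q. set p \<inter> set q \<inter> N = {}) P" "card P = \<sigma>"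
    by (rule sigmaN_attained)
  have "finite P" using finite_subset[OF P(1) finite_st_paths] by simp
  have nonneg: "\<And>i. 0 \<le> x $ i" and support: "\<And>i. i \<notin> N \<Longrightarrow> x $ i = 0"
    and total: "(\<Sum>i\<in>N. x $ i) = \<sigma>" and ge_1: "\<And>p. p \<in> paths \<Longrightarrow> 1 \<le> path_weight x p"
    using x by (auto simp: fractional_min_cut_def)
  define U where "U = (\<Union>p\<in>P. set p \<inter> N)"
  have "(\<Sum>i\<in>U. x $ i) = (\<Sum>p\<in>P. \<Sum>i\<in>set p \<inter> N. x $ i)"
    unfolding U_def using \<open>finite P\<close> P(2) by (intro sum.UNION_disjoint) (auto simp: pairwise_def)
  also have "\<dots> = (\<Sum>p\<in>P. path_weight x p)"
    unfolding path_weight_def using support by (intro sum.cong refl sum.mono_neutral_left) auto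
  finally have sum_U: "(\<Sum>i\<in>U. x $ i) = (\<Sum>p\<in>P. path_weight x p - 1) + \<sigma>"
    using P(3) by (simp add: sum_subtractf)
  have "(\<Sum>i\<in>N. x $ i) = (\<Sum>i\<in>N - U. x $ i) + (\<Sum>i\<in>U. x $ i)"
    by (rule sum.subset_diff) (auto simp: U_def)
  moreover have "0 \<le> (\<Sum>i\<in>N - U. x $ i)" using nonneg by (intro sum_nonneg)
  moreover have "0 \<le> (\<Sum>p\<in>P. path_weight x p - 1)"
    using ge_1 P(1) by (intro sum_nonneg) force
  ultimately have "(\<Sum>i\<in>N - U. x $ i) = 0" "(\<Sum>p\<in>P. path_weight x p - 1) = 0"
    using total sum_U by linarith+
  then have outside: "\<forall>i\<in>N - U. x $ i = 0" and tight: "\<forall>p\<in>P. path_weight x p = 1"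
    using nonneg ge_1 P(1) \<open>finite P\<close> by (auto simp: sum_nonneg_eq_0_iff subset_eq)
  have "\<forall>i\<in>N. x $ i \<noteq> 0 \<longrightarrow> (\<exists>p\<in>P. i \<in> set p)" using outside unfolding U_def by blast
  then show thesis using that P(1,3) tight by blast
qed

lemma zero_cut_is_min_cut:
  assumes x: "fractional_min_cut x"
  shows "is_min_cut_N src trg s t E N (zero_cut x)"
proof -
  let ?C = "zero_cut x"
  obtain P where P: "P \<subseteq> paths" "card P = \<sigma>" "\<forall>p\<in>P. path_weight x p = 1"
    "\<forall>i\<in>N. x $ i \<noteq> 0 \<longrightarrow> (\<exists>p\<in>P. i \<in> set p)"
    by (rule fractional_min_cut_tight_paths[OF x])
  have "finite P" using finite_subset[OF P(1) finite_st_paths] by simp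
  have "?C \<subseteq> (\<Union>p\<in>P. set p \<inter> ?C)"
    using P(4) zero_cut_positive[OF x] by fastforce
  then have "card ?C \<le> card (\<Union>p\<in>P. set p \<inter> ?C)" by (intro card_mono) simp_all
  also have "\<dots> \<le> (\<Sum>p\<in>P. card (set p \<inter> ?C))" by (rule card_UN_le[OF \<open>finite P\<close>])
  also have "\<dots> \<le> (\<Sum>p\<in>P. 1)"
    using card_zero_cut_inter_le_1[OF x] P(1,3) by (intro sum_mono) blast
  also have "\<dots> = \<sigma>" using P(2) by simp
  finally show ?thesis
    using zero_cut_is_cut[OF x] sigmaN_le_card_cut unfolding is_min_cut_N_def by fastforce
qed

lemma fractional_min_cut_peel:
  assumes x: "fractional_min_cut x" and \<theta>: "0 < \<theta>" "\<theta> < 1"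
    and le: "\<forall>e\<in>zero_cut x. \<theta> \<le> x $ e"
  shows "fractional_min_cut ((1 / (1 - \<theta>)) *\<^sub>R (x - \<theta> *\<^sub>R incidence_vec (zero_cut x)))"
    (is "fractional_min_cut ?y")
proof -
  let ?C = "zero_cut x"
  have nonneg: "\<And>i. 0 \<le> x $ i" and support: "\<And>i. i \<notin> N \<Longrightarrow> x $ i = 0"
    and total: "(\<Sum>i\<in>N. x $ i) = \<sigma>" and ge_1: "\<And>p. p \<in> paths \<Longrightarrow> 1 \<le> path_weight x p"
    using x by (auto simp: fractional_min_cut_def)
  have "?C \<subseteq> N" using zero_cut_positive(1)[OF x] by blast
  have card_C: "card ?C = \<sigma>" using card_min_cut_N[OF zero_cut_is_min_cut[OF x]] .
  have y_nth: "?y $ i = (x $ i - \<theta> * incidence_vec ?C $ i) / (1 - \<theta>)" for i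
    by (simp add: divide_inverse mult.commute)
  have y_sum: "(\<Sum>i\<in>S. ?y $ i) = ((\<Sum>i\<in>S. x $ i) - \<theta> * card (S \<inter> ?C)) / (1 - \<theta>)" for S
    unfolding y_nth sum_divide_distrib[symmetric]
    by (simp add: sum_subtractf sum_distrib_left[symmetric] sum_incidence_vec)
  have "0 \<le> ?y $ i" for i
    using nonneg[of i] le \<theta> by (auto simp: y_nth incidence_vec_nth)
  moreover have "?y $ i = 0" if "i \<notin> N" for i
    using support[OF that] \<open>?C \<subseteq> N\<close> that by (auto simp: y_nth incidence_vec_nth)
  moreover have "(\<Sum>i\<in>N. ?y $ i) = \<sigma>"
    unfolding y_sum using \<theta> total card_C \<open>?C \<subseteq> N\<close> by (simp add: Int_absorb1 field_simps)
  moreover have "1 \<le> path_weight ?y p" if p: "p \<in> paths" for p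
  proof -
    obtain e where e: "e \<in> set p \<inter> ?C"
      and weight: "1 + (\<Sum>a\<in>set p \<inter> ?C - {e}. x $ a) \<le> path_weight x p"
      by (rule zero_cut_crossings[OF x p])
    have "card (set p \<inter> ?C - {e}) = card (set p \<inter> ?C) - 1" "1 \<le> card (set p \<inter> ?C)"
      using e by (auto simp: card_Diff_singleton Suc_le_eq card_gt_0_iff)
    then have "\<theta> * (real (card (set p \<inter> ?C)) - 1) = (\<Sum>a\<in>set p \<inter> ?C - {e}. \<theta>)"
      by (simp add: of_nat_diff)
    also have "\<dots> \<le> (\<Sum>a\<in>set p \<inter> ?C - {e}. x $ a)"
      using le by (intro sum_mono) auto
    finally have "1 - \<theta> \<le> path_weight x p - \<theta> * card (set p \<inter> ?C)"
      using weight by (simp add: algebra_simps)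
    moreover have "path_weight ?y p = (path_weight x p - \<theta> * card (set p \<inter> ?C)) / (1 - \<theta>)"
      unfolding path_weight_def by (rule y_sum)
    ultimately show ?thesis using \<theta> by (simp add: pos_le_divide_eq)
  qed
  ultimately show ?thesis unfolding fractional_min_cut_def by blast
qed

lemma fractional_min_cut_split:
  assumes x: "fractional_min_cut x" and "\<exists>e\<in>zero_cut x. x $ e < 1"
  obtains \<theta> y where "0 < \<theta>" "\<theta> < 1" "fractional_min_cut y"
    "x = \<theta> *\<^sub>R incidence_vec (zero_cut x) + (1 - \<theta>) *\<^sub>R y"
    "{i. y $ i \<noteq> 0} \<subset> {i. x $ i \<noteq> 0}"
proof -
  let ?C = "zero_cut x"
  define \<theta> where "\<theta> = Min ((\<lambda>e. x $ e) ` ?C)"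
  have "?C \<noteq> {}" using assms(2) by blast
  then obtain e0 where e0: "e0 \<in> ?C" "x $ e0 = \<theta>"
    unfolding \<theta>_def using Min_in[of "(\<lambda>e. x $ e) ` ?C"] by fastforce
  have le: "\<forall>e\<in>?C. \<theta> \<le> x $ e" unfolding \<theta>_def by simp
  have "0 < \<theta>" using zero_cut_positive(2)[OF x e0(1)] e0(2) by simp
  moreover have "\<theta> < 1" using assms(2) le by force
  ultimately have \<theta>: "0 < \<theta>" "\<theta> < 1" .
  define y where "y = (1 / (1 - \<theta>)) *\<^sub>R (x - \<theta> *\<^sub>R incidence_vec ?C)"
  have y: "fractional_min_cut y"
    unfolding y_def by (rule fractional_min_cut_peel[OF x \<theta> le])
  have y_nth: "y $ i = (x $ i - \<theta> * (if i \<in> ?C then 1 else 0)) / (1 - \<theta>)" for i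
    by (simp add: y_def incidence_vec_nth)
  have "x = \<theta> *\<^sub>R incidence_vec ?C + (1 - \<theta>) *\<^sub>R y"
    using \<theta> by (simp add: vec_eq_iff y_nth incidence_vec_nth)
  moreover have "{i. y $ i \<noteq> 0} \<subset> {i. x $ i \<noteq> 0}"
  proof
    show "{i. y $ i \<noteq> 0} \<subseteq> {i. x $ i \<noteq> 0}"
    proof (intro subsetI CollectI notI)
      fix i assume "i \<in> {i. y $ i \<noteq> 0}" and "x $ i = 0"
      then have "i \<notin> ?C" using zero_cut_positive(2)[OF x, of i] by auto
      then show False using \<open>i \<in> {i. y $ i \<noteq> 0}\<close> \<open>x $ i = 0\<close> by (simp add: y_nth)
    qed
    have "e0 \<in> {i. x $ i \<noteq> 0} - {i. y $ i \<noteq> 0}"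
      using e0 \<theta> by (simp add: y_nth incidence_vec_nth)
    then show "{i. y $ i \<noteq> 0} \<noteq> {i. x $ i \<noteq> 0}" by blast
  qed
  ultimately show thesis using that \<theta> y by blast
qed

lemma fractional_min_cut_in_convex_hull:
  assumes "fractional_min_cut x"
  shows "x \<in> convex hull {incidence_vec C | C. is_min_cut_N src trg s t E N C}"
  using assms
proof (induction "card {i. x $ i \<noteq> 0}" arbitrary: x rule: less_induct)
  case less
  let ?H = "{incidence_vec C | C. is_min_cut_N src trg s t E N C}"
  let ?C = "zero_cut x"
  have min_cut: "is_min_cut_N src trg s t E N ?C" using zero_cut_is_min_cut[OF less.prems] .
  then have C_in_hull: "incidence_vec ?C \<in> convex hull ?H" by (intro hull_inc) blast
  show ?case
  proof (cases "\<exists>e\<in>?C. x $ e < 1")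
    case False
    have "x = incidence_vec ?C"
      using less.prems zero_cut_positive(1)[OF less.prems] card_min_cut_N[OF min_cut] False
      by (intro eq_incidence_vec_if_ge_one[where N = N]) (auto simp: fractional_min_cut_def not_less)
    then show ?thesis using C_in_hull by simp
  next
    case True
    obtain \<theta> y where \<theta>: "0 < \<theta>" "\<theta> < 1" and y: "fractional_min_cut y"
      and x_eq: "x = \<theta> *\<^sub>R incidence_vec ?C + (1 - \<theta>) *\<^sub>R y"
      and support: "{i. y $ i \<noteq> 0} \<subset> {i. x $ i \<noteq> 0}"
      by (rule fractional_min_cut_split[OF less.prems True])
    have "card {i. y $ i \<noteq> 0} < card {i. x $ i \<noteq> 0}" using support by (simp add: psubset_card_mono)
    then have "y \<in> convex hull ?H" using less.hyps y by blast
    then have "\<theta> *\<^sub>R incidence_vec ?C + (1 - \<theta>) *\<^sub>R y \<in> convex hull ?H"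
      using C_in_hull \<theta> by (intro convexD[OF convex_convex_hull]) auto
    then show ?thesis by (subst x_eq)
  qed
qed

end

theorem lemma6:
  fixes V :: "'v set" and E N :: "'e::finite set" and src trg :: "'e \<Rightarrow> 'v" and s t :: 'v
  assumes "finite E"
    and "s \<in> V" and "t \<in> V" and "s \<noteq> t"
    and "\<forall>a\<in>E. src a \<in> V \<and> trg a \<in> V"
    and "N \<subseteq> E"
    and "\<forall>p \<in> st_paths src trg s t E. set p \<inter> N \<noteq> {}"
    and "\<forall>a\<in>E. \<exists>p \<in> st_paths src trg s t E. a \<in> set p"
  shows "core_tilde src trg s t E N =
         convex hull {incidence_vec C | C. is_min_cut_N src trg s t E N C}"
proof -
  interpret network src trg s t E N
    using assms(4,6,7) by unfold_locales
  show ?thesis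
    using core_tilde_fractional_min_cut fractional_min_cut_in_convex_hull
      convex_hull_min_cuts_subset_core
    by blast
qed

end
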